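(* Let $E$ be a fixed-point equation system with interpretation $[\![E]\!]\colon\mathbb{E}(D)\to\mathbb{E}(D)$, and let $\eta'\in\mathbb{E}(D)$. Then $\eta'\le\mu[\![E]\!]$ holds if there exist: (a) a fixed-point equation system $E'$ over the same quantitative predicate variables such that $[\![E']\!]\le[\![E]\!]$ (i.e. $[\![E']\!](\eta)\le[\![E]\!](\eta)$ for all $\eta\in\mathbb{E}(D)$); (b) $u\in\mathbb{E}(D)$ with $[\![E']\!](u)\le u$; (c) a function $r\colon D\to[0,\infty)$ with $(\mathsf{D}[\![E']\!])(r)+u\le r$; and (d) $\eta'\le u$ together with $\eta'\le[\![E']\!](\eta')$.
   Context: $\mathbb{E}(D)$ is the set of functions $D\to[0,\infty]$ with pointwise order and operations ($\infty+x=\infty$, $0\cdot\infty=0$, $r\cdot\infty=\infty$ for $r>0$); for $x\ge y$ in $[0,\infty]$, $x-y$ is the least $z$ with $x=y+z$; $\mathbb{O}$ is the zero function; for a map $K$ on $\mathbb{E}(D)$, $(\mathsf{D}K)(\eta)=K(\eta)-K(\mathbb{O})$; $\mu K$ is the least fixed point. Quantitative formulas over quantitative predicate variables $X_1,\dots,X_n$ (with $X_j$ of type $D_j\to\Omega$) are given by $F ::= X_j(\tilde e)\mid t\mid F_1+F_2\mid t\cdot F\mid \mathbf{if}\ \varphi\ \mathbf{then}\ F_1\ \mathbf{else}\ F_2$, where $\tilde e$ are expressions (functions of the term variables) of the argument data types, $t$ is a term taking values in $[0,\infty)$, and $\varphi$ is a boolean expression. For $\eta=(\eta_1,\dots,\eta_n)$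 and a valuation $v$ of the term variables: $[\![X_j(e)]\!](\eta)(v)=\eta_j([\![e]\!](v))$, $[\![t]\!](\eta)(v)=[\![t]\!](v)$, sums and scalar products pointwise, and the conditional by cases on $[\![\varphi]\!](v)$. A fixed-point equation system is $E=\{X_i(\tilde x_i)=_\mu F_i\}_{i=1}^n$ with $\tilde x_i$ ranging over $D_i$ and $F_i$ having free term variables among $\tilde x_i$; with $D=\coprod_j D_j$ and $\prod_j\mathbb{E}(D_j)\cong\mathbb{E}(D)$, its interpretation is $[\![E]\!](\eta)=([\![F_1]\!](\eta),\dots,[\![F_n]\!](\eta))$. *)

theory Defs
  imports "HOL-Library.Extended_Nonnegative_Real"
begin

text \<open>The disjoint union D of the data types D_j is modelled by a type 'd together
with a map idx :: 'd => 'i assigning to each point the index j of its component,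
so D_j = {x. idx x = j}. Elements of E(D) are functions 'd => ennreal.
A term variable valuation for equation i is a point v of D_i.\<close>

datatype ('i, 'd) qform =
    PVar 'i "'d \<Rightarrow> 'd"
  | Tm "'d \<Rightarrow> real"
  | Plus "('i, 'd) qform" "('i, 'd) qform"
  | Scale "'d \<Rightarrow> real" "('i, 'd) qform"
  | Ite "'d \<Rightarrow> bool" "('i, 'd) qform" "('i, 'd) qform"

fun wf_form :: "('d \<Rightarrow> 'i) \<Rightarrow> 'i \<Rightarrow> ('i, 'd) qform \<Rightarrow> bool" where
  "wf_form idx i (PVar j e) = (\<forall>v. idx v = i \<longrightarrow> idx (e v) = j)"
| "wf_form idx i (Tm t) = (\<forall>v. idx v = i \<longrightarrow> t v \<ge> 0)"
| "wf_form idx i (Plus F G) = (wf_form idx i F \<and> wf_form idx i G)"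
| "wf_form idx i (Scale t F) = ((\<forall>v. idx v = i \<longrightarrow> t v \<ge> 0) \<and> wf_form idx i F)"
| "wf_form idx i (Ite b F G) = (wf_form idx i F \<and> wf_form idx i G)"

fun qsem :: "('i, 'd) qform \<Rightarrow> ('d \<Rightarrow> ennreal) \<Rightarrow> 'd \<Rightarrow> ennreal" where
  "qsem (PVar j e) \<eta> v = \<eta> (e v)"
| "qsem (Tm t) \<eta> v = ennreal (t v)"
| "qsem (Plus F G) \<eta> v = qsem F \<eta> v + qsem G \<eta> v"
| "qsem (Scale t F) \<eta> v = ennreal (t v) * qsem F \<eta> v"
| "qsem (Ite b F G) \<eta> v = (if b v then qsem F \<eta> v else qsem G \<eta> v)"

definition wf_sys :: "('d \<Rightarrow> 'i) \<Rightarrow> ('i \<Rightarrow> ('i, 'd) qform) \<Rightarrow> bool" where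
  "wf_sys idx E = (\<forall>i. wf_form idx i (E i))"

definition sys_sem :: "('d \<Rightarrow> 'i) \<Rightarrow> ('i \<Rightarrow> ('i, 'd) qform) \<Rightarrow> ('d \<Rightarrow> ennreal) \<Rightarrow> 'd \<Rightarrow> ennreal" where
  "sys_sem idx E \<eta> x = qsem (E (idx x)) \<eta> x"

definition esub :: "ennreal \<Rightarrow> ennreal \<Rightarrow> ennreal" where
  "esub x y = Inf {z. x = y + z}"

definition Dop :: "(('d \<Rightarrow> ennreal) \<Rightarrow> 'd \<Rightarrow> ennreal) \<Rightarrow> ('d \<Rightarrow> ennreal) \<Rightarrow> 'd \<Rightarrow> ennreal" where
  "Dop K \<eta> = (\<lambda>x. esub (K \<eta> x) (K (\<lambda>_. 0) x))"

end

theory Submission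
  imports Defs "HOL-Library.Function_Algebras"
begin

text \<open>Every right-hand side denotes an affine map: \<open>[[E']](\<eta>) = [[E']](0) + L \<eta>\<close>
with \<open>L = D[[E']]\<close> additive and monotone. Hence \<open>\<eta>' \<le> [[E']](\<eta>')\<close> gives, by iteration,
\<open>\<eta>' \<le> [[E']]^n(0) + L^n \<eta>' \<le> \<mu>[[E']] + L^n u\<close>. Unfolding \<open>L r + u \<le> r\<close> yields
\<open>u + L u + ... + L^(n-1) u \<le> r\<close>, and as \<open>L u \<le> u\<close> makes the iterates \<open>L^k u\<close> decrease, \<open>n L^n u \<le> r\<close>.
Since \<open>r\<close> is finite, \<open>L^n u\<close> tends to 0 pointwise, so \<open>\<eta>' \<le> \<mu>[[E']] \<le> \<mu>[[E]]\<close>.\<close>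

lemma esub_add_cancel_left:
  fixes y z :: ennreal
  assumes "y < top"
  shows "esub (y + z) y = z"
proof -
  have "{w. y + z = y + w} = {z}"
    using assms by (auto simp: ennreal_add_left_cancel)
  then show ?thesis
    unfolding esub_def by simp
qed

lemma ennreal_eq_0_if_of_nat_mult_le:
  fixes l c :: ennreal
  assumes "\<And>n. of_nat n * l \<le> c" and "c < top"
  shows "l = 0"
proof (rule ccontr)
  assume "l \<noteq> 0"
  have "top = (SUP n. of_nat n :: ennreal) * l"
    using \<open>l \<noteq> 0\<close> by (simp add: ennreal_SUP_of_nat_eq_top)
  also have "\<dots> = (SUP n. of_nat n * l)"
    by (rule SUP_mult_right_ennreal)
  also have "\<dots> \<le> c"
    using assms(1) by (rule SUP_least)
  finally show False
    using \<open>c < top\<close> by (simp add: top_unique)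
qed

lemma sum_apply: "(\<Sum>k\<in>A. f k) x = (\<Sum>k\<in>A. f k x)"
  by (induction A rule: infinite_finite_induct) auto

lemma funpow_additive:
  fixes L :: "'a::semigroup_add \<Rightarrow> 'a"
  assumes "\<And>a b. L (a + b) = L a + L b"
  shows "(L ^^ n) (a + b) = (L ^^ n) a + (L ^^ n) b"
  by (induction n) (simp_all add: assms)

lemma funpow_affine:
  fixes K L :: "'a::monoid_add \<Rightarrow> 'a"
  assumes K: "\<And>\<eta>. K \<eta> = K 0 + L \<eta>"
    and L: "\<And>a b. L (a + b) = L a + L b"
  shows "(K ^^ n) \<eta> = (K ^^ n) 0 + (L ^^ n) \<eta>"
proof (induction n)
  case (Suc n)
  have "(K ^^ Suc n) \<eta> = K 0 + L ((K ^^ n) 0) + (L ^^ Suc n) \<eta>"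
    by (simp add: Suc.IH K[of "_ + _"] L add.assoc)
  also have "K 0 + L ((K ^^ n) 0) = (K ^^ Suc n) 0"
    by (simp add: K[of "(K ^^ n) 0"])
  finally show ?case .
qed simp

lemma funpow_antimono:
  fixes f :: "'a::order \<Rightarrow> 'a"
  assumes "mono f" and "f x \<le> x" and "k \<le> n"
  shows "(f ^^ n) x \<le> (f ^^ k) x"
  using \<open>k \<le> n\<close>
proof (induction rule: dec_induct)
  case (step n)
  have "(f ^^ Suc n) x = (f ^^ n) (f x)"
    by (simp add: funpow_swap1)
  also have "\<dots> \<le> (f ^^ n) x"
    using assms(1,2) by (rule funpow_mono)
  finally show ?case
    using step.IH by simp
qed simp

lemma sum_funpow_le_ranking:
  fixes L :: "'a::ordered_comm_monoid_add \<Rightarrow> 'a"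
  assumes "mono L" and "\<And>a b. L (a + b) = L a + L b"
    and "L r + u \<le> r"
  shows "(\<Sum>k<n. (L ^^ k) u) + (L ^^ n) r \<le> r"
proof (induction n)
  case (Suc n)
  have "(\<Sum>k<Suc n. (L ^^ k) u) + (L ^^ Suc n) r
      = (\<Sum>k<n. (L ^^ k) u) + ((L ^^ n) u + (L ^^ n) (L r))"
    by (simp add: funpow_swap1 add.assoc)
  also have "\<dots> = (\<Sum>k<n. (L ^^ k) u) + (L ^^ n) (u + L r)"
    by (simp only: funpow_additive[of L, OF assms(2)])
  also have "\<dots> \<le> (\<Sum>k<n. (L ^^ k) u) + (L ^^ n) r"
    using assms(3) by (intro add_left_mono funpow_mono[OF assms(1)]) (simp add: add.commute)
  finally show ?case
    using Suc.IH by (rule order_trans)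
qed simp

lemma INF_funpow_eq_0_of_ranking:
  fixes L :: "('d \<Rightarrow> ennreal) \<Rightarrow> 'd \<Rightarrow> ennreal"
  assumes "mono L" and "\<And>a b. L (a + b) = L a + L b"
    and "L u \<le> u" and "L r + u \<le> r" and "r x < top"
  shows "(INF n. (L ^^ n) u x) = 0"
proof (rule ennreal_eq_0_if_of_nat_mult_le)
  fix n
  have "of_nat n * (INF m. (L ^^ m) u x) \<le> of_nat n * (L ^^ n) u x"
    by (intro mult_left_mono INF_lower) simp_all
  also have "\<dots> = (\<Sum>k<n. (L ^^ n) u x)"
    by simp
  also have "\<dots> \<le> (\<Sum>k<n. (L ^^ k) u x)"
  proof (rule sum_mono)
    fix k assume "k \<in> {..<n}"
    then have "(L ^^ n) u \<le> (L ^^ k) u"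
      by (intro funpow_antimono[OF assms(1,3)]) simp
    then show "(L ^^ n) u x \<le> (L ^^ k) u x"
      by (rule le_funD)
  qed
  also have "\<dots> = (\<Sum>k<n. (L ^^ k) u) x"
    by (rule sum_apply[symmetric])
  also have "\<dots> \<le> ((\<Sum>k<n. (L ^^ k) u) + (L ^^ n) r) x"
    by simp
  also have "\<dots> \<le> r x"
    using sum_funpow_le_ranking[OF assms(1,2,4)] by (rule le_funD)
  finally show "of_nat n * (INF m. (L ^^ m) u x) \<le> r x" .
qed (fact assms(5))

lemma le_lfp_plus_funpow:
  fixes K L :: "('d \<Rightarrow> ennreal) \<Rightarrow> 'd \<Rightarrow> ennreal"
  assumes "mono K" and K: "\<And>\<eta>. K \<eta> = K 0 + L \<eta>"
    and L: "\<And>a b. L (a + b) = L a + L b"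
    and "\<eta> \<le> K \<eta>"
  shows "\<eta> \<le> lfp K + (L ^^ n) \<eta>"
proof -
  have "(K ^^ n) 0 \<le> lfp K"
    using Kleene_iter_lpfp[OF \<open>mono K\<close>, of "lfp K" n] lfp_unfold[OF \<open>mono K\<close>]
    by (simp add: bot_fun_def bot_ennreal zero_fun_def)
  have "\<eta> \<le> (K ^^ n) \<eta>"
    using funpow_mono2[OF \<open>mono K\<close> le0 order_refl \<open>\<eta> \<le> K \<eta>\<close>] by simp
  also have "\<dots> = (K ^^ n) 0 + (L ^^ n) \<eta>"
    by (rule funpow_affine[of K L, OF K L])
  also have "\<dots> \<le> lfp K + (L ^^ n) \<eta>"
    using \<open>(K ^^ n) 0 \<le> lfp K\<close> by (rule add_right_mono)
  finally show ?thesis .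
qed

fun lin_qsem :: "('i, 'd) qform \<Rightarrow> ('d \<Rightarrow> ennreal) \<Rightarrow> 'd \<Rightarrow> ennreal" where
  "lin_qsem (PVar j e) \<eta> v = \<eta> (e v)"
| "lin_qsem (Tm t) \<eta> v = 0"
| "lin_qsem (Plus F G) \<eta> v = lin_qsem F \<eta> v + lin_qsem G \<eta> v"
| "lin_qsem (Scale t F) \<eta> v = ennreal (t v) * lin_qsem F \<eta> v"
| "lin_qsem (Ite b F G) \<eta> v = (if b v then lin_qsem F \<eta> v else lin_qsem G \<eta> v)"

lemma qsem_eq_qsem_zero_plus_lin_qsem: "qsem F \<eta> v = qsem F (\<lambda>_. 0) v + lin_qsem F \<eta> v"
  by (induction F arbitrary: v) (auto simp: distrib_left ac_simps)

lemma qsem_zero_less_top: "qsem F (\<lambda>_. 0) v < top"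
  by (induction F arbitrary: v) (auto simp: ennreal_mult_less_top)

lemma qsem_mono: "\<eta> \<le> \<eta>' \<Longrightarrow> qsem F \<eta> v \<le> qsem F \<eta>' v"
  by (induction F arbitrary: v) (auto simp: le_fun_def intro: add_mono mult_left_mono)

lemma lin_qsem_mono: "\<eta> \<le> \<eta>' \<Longrightarrow> lin_qsem F \<eta> v \<le> lin_qsem F \<eta>' v"
  by (induction F arbitrary: v) (auto simp: le_fun_def intro: add_mono mult_left_mono)

lemma lin_qsem_add: "lin_qsem F (\<lambda>y. a y + b y) v = lin_qsem F a v + lin_qsem F b v"
  by (induction F arbitrary: v) (auto simp: distrib_left ac_simps)

definition lin_sys_sem ::
    "('d \<Rightarrow> 'i) \<Rightarrow> ('i \<Rightarrow> ('i, 'd) qform) \<Rightarrow> ('d \<Rightarrow> ennreal) \<Rightarrow> 'd \<Rightarrow> ennreal" where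
  "lin_sys_sem idx E \<eta> x = lin_qsem (E (idx x)) \<eta> x"

lemma sys_sem_eq_sys_sem_zero_plus_lin:
  "sys_sem idx E \<eta> = sys_sem idx E 0 + lin_sys_sem idx E \<eta>"
  unfolding sys_sem_def lin_sys_sem_def plus_fun_def zero_fun_def
  by (rule ext) (rule qsem_eq_qsem_zero_plus_lin_qsem)

lemma mono_sys_sem: "mono (sys_sem idx E)"
  unfolding mono_def sys_sem_def le_fun_def by (simp add: qsem_mono le_fun_def)

lemma mono_lin_sys_sem: "mono (lin_sys_sem idx E)"
  unfolding mono_def lin_sys_sem_def le_fun_def by (simp add: lin_qsem_mono le_fun_def)

lemma lin_sys_sem_add: "lin_sys_sem idx E (a + b) = lin_sys_sem idx E a + lin_sys_sem idx E b"
  unfolding lin_sys_sem_def plus_fun_def by (simp add: lin_qsem_add)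

lemma Dop_sys_sem: "Dop (sys_sem idx E) \<eta> = lin_sys_sem idx E \<eta>"
proof
  fix x
  have "sys_sem idx E (\<lambda>_. 0) x < top"
    unfolding sys_sem_def by (rule qsem_zero_less_top)
  then show "Dop (sys_sem idx E) \<eta> x = lin_sys_sem idx E \<eta> x"
    unfolding Dop_def sys_sem_eq_sys_sem_zero_plus_lin[of idx E \<eta>]
    by (simp add: zero_fun_def esub_add_cancel_left)
qed

theorem theorem4p1:
  fixes idx :: "'d \<Rightarrow> 'i::finite"
    and E E' :: "'i \<Rightarrow> ('i, 'd) qform"
    and eta' u :: "'d \<Rightarrow> ennreal"
    and r :: "'d \<Rightarrow> real"
  assumes "wf_sys idx E" and "wf_sys idx E'"
    and "\<forall>\<eta>. sys_sem idx E' \<eta> \<le> sys_sem idx E \<eta>"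
    and "sys_sem idx E' u \<le> u"
    and "\<forall>x. r x \<ge> 0"
    and "\<forall>x. Dop (sys_sem idx E') (\<lambda>y. ennreal (r y)) x + u x \<le> ennreal (r x)"
    and "eta' \<le> u" and "eta' \<le> sys_sem idx E' eta'"
  shows "eta' \<le> lfp (sys_sem idx E)"
proof -
  let ?K = "sys_sem idx E'" and ?L = "lin_sys_sem idx E'"
  note affine = sys_sem_eq_sys_sem_zero_plus_lin[of idx E']
  have "?L u \<le> ?K u"
    unfolding affine[of u] by (simp add: le_fun_def)
  then have decreasing: "?L u \<le> u"
    using assms(4) by (rule order_trans)
  have ranking: "?L (\<lambda>y. ennreal (r y)) + u \<le> (\<lambda>y. ennreal (r y))"
    using assms(6) by (simp add: le_fun_def Dop_sys_sem)
  have vanish: "(INF n. (?L ^^ n) u x) = 0" for x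
    by (rule INF_funpow_eq_0_of_ranking[OF mono_lin_sys_sem lin_sys_sem_add decreasing ranking])
      simp
  have "eta' x \<le> lfp ?K x + (?L ^^ n) u x" for x n
  proof -
    have "eta' \<le> lfp ?K + (?L ^^ n) eta'"
      by (rule le_lfp_plus_funpow[where K = ?K and L = ?L,
            OF mono_sys_sem affine lin_sys_sem_add assms(8)])
    also have "\<dots> \<le> lfp ?K + (?L ^^ n) u"
      by (intro add_left_mono funpow_mono[OF mono_lin_sys_sem assms(7)])
    finally show ?thesis
      by (simp add: le_fun_def)
  qed
  then have "eta' x \<le> lfp ?K x + (INF n. (?L ^^ n) u x)" for x
    by (simp add: INF_ennreal_const_add[symmetric] INF_greatest)
  then have "eta' \<le> lfp ?K"
    by (simp add: vanish le_fun_def)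
  also have "lfp ?K \<le> lfp (sys_sem idx E)"
    using assms(3) by (intro lfp_mono) simp
  finally show ?thesis .
qed

end
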